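(* Let $0<\alpha<1$. Then $$\|\mathcal{C}\|_{H^\infty_{\alpha,\log}\to H^\infty_\alpha}=\sup_{0\le r<1}\int_0^\infty\frac{(1+r)^\alpha e^{-t}\big(1-(1-e^{-t})r\big)^{2\alpha-1}}{\big(1-(1-2e^{-t})r\big)^\alpha\log\dfrac{2e^{1/\alpha}}{1-\left(\frac{re^{-t}}{1-(1-e^{-t})r}\right)^2}}\,dt,$$ and $$\|\mathcal{C}\|_{H^\infty_{\alpha,\log}\to H^\infty_\alpha}\ge\frac{1}{\frac1\alpha+\log 2}.$$
   Context: $\mathbb{D}$ is the open unit disc and $H(\mathbb{D})$ the space of analytic functions on $\mathbb{D}$. For $f(z)=\sum_{k\ge0}a_kz^k\in H(\mathbb{D})$ the Ces\`aro operator is $\mathcal{C}(f)(z)=\sum_{n\ge0}\Big(\frac{1}{n+1}\sum_{k=0}^n a_k\Big)z^n=\int_0^1\frac{f(tz)}{1-tz}\,dt$. For $0<\alpha<1$: the Korenblum space $H^\infty_\alpha$ consists of $f\in H(\mathbb{D})$ with $\|f\|_{H^\infty_\alpha}=\sup_{z\in\mathbb{D}}(1-|z|^2)^\alpha|f(z)|<\infty$; the logarithmically weighted Korenblum space $H^\infty_{\alpha,\log}$ consists of $f\in H(\mathbb{D})$ with $\|f\|_{H^\infty_{\alpha,\log}}=\sup_{z\in\mathbb{D}}(1-|z|^2)^\alpha\log\frac{2e^{1/\alpha}}{1-|z|^2}\,|f(z)|<\infty$. Operator norms are $\|\mathcal{C}\|_{X\to Y}=\sup\{\|\mathcal{C}f\|_Y:\|f\|_X\le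 1\}$. *)

theory Defs
  imports "HOL-Analysis.Analysis"
begin

definition unit_disc :: "complex set" where
  "unit_disc = ball 0 1"

text \<open>Cesaro operator, via the integral representation
  C(f)(z) = integral over [0,1] of f(tz)/(1-tz) dt.\<close>
definition cesaro :: "(complex \<Rightarrow> complex) \<Rightarrow> complex \<Rightarrow> complex" where
  "cesaro f z = integral {0..1} (\<lambda>t::real. f (of_real t * z) / (1 - of_real t * z))"

definition korenblum_norm :: "real \<Rightarrow> (complex \<Rightarrow> complex) \<Rightarrow> ereal" where
  "korenblum_norm \<alpha> f =
     (SUP z\<in>unit_disc. ereal ((1 - (cmod z)\<^sup>2) powr \<alpha> * cmod (f z)))"

definition korenblum_log_norm :: "real \<Rightarrow> (complex \<Rightarrow> complex) \<Rightarrow> ereal" where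
  "korenblum_log_norm \<alpha> f =
     (SUP z\<in>unit_disc. ereal ((1 - (cmod z)\<^sup>2) powr \<alpha>
        * ln (2 * exp (1/\<alpha>) / (1 - (cmod z)\<^sup>2)) * cmod (f z)))"

definition cesaro_norm_log_to_korenblum :: "real \<Rightarrow> ereal" where
  "cesaro_norm_log_to_korenblum \<alpha> =
     (SUP f\<in>{f. f holomorphic_on unit_disc \<and> korenblum_log_norm \<alpha> f \<le> 1}.
        korenblum_norm \<alpha> (cesaro f))"

definition cesaro_kernel :: "real \<Rightarrow> real \<Rightarrow> real \<Rightarrow> real" where
  "cesaro_kernel \<alpha> r t =
     (1 + r) powr \<alpha> * exp (-t) * (1 - (1 - exp (-t)) * r) powr (2*\<alpha> - 1)
     / ((1 - (1 - 2 * exp (-t)) * r) powr \<alpha>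
        * ln (2 * exp (1/\<alpha>) / (1 - (r * exp (-t) / (1 - (1 - exp (-t)) * r))\<^sup>2)))"

end

theory Submission
  imports Defs
begin

(* Write W(x) = x^\<alpha> log (2 e^(1/\<alpha>) / x), so that the unit ball of the log-weighted space is
   |f z| \<le> 1 / W(1 - |z|^2). Inserting this into C f(z) = \<integral>\<^sub>0\<^sup>1 f(sz) / (1 - sz) ds gives
   |C f(z)| \<le> \<integral>\<^sub>0\<^sup>1 ds / (W(1 - s^2|z|^2) (1 - s|z|)). The bound is attained at z = r \<in> [0,1) by
   F(z) = (1 - z^2)^(-\<alpha>) / Log (2 e^(1/\<alpha>) / (1 - z^2)), which lies in the unit ball because
   |1 - z^2| \<ge> 1 - |z|^2 and W increases on (0,2]. So the norm is the supremum over r of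
   (1 - r^2)^\<alpha> times that integral; the substitution e^(-t) = s(1 - r) / (1 - sr) turns it into the
   stated kernel integral, and r = 0 gives 1 / (1/\<alpha> + log 2). *)

definition korenblum_log_weight :: "real \<Rightarrow> real \<Rightarrow> real" where
  "korenblum_log_weight \<alpha> x = x powr \<alpha> * ln (2 * exp (1/\<alpha>) / x)"

lemma ln_korenblum_log_weight_pos:
  fixes \<alpha> x :: real
  assumes "0 < \<alpha>" "0 < x" "x \<le> 2"
  shows "0 < ln (2 * exp (1/\<alpha>) / x)"
proof -
  have "1 < exp (1/\<alpha>)"
    using assms by simp
  then have "x < 2 * exp (1/\<alpha>)"
    using assms by linarith
  then show ?thesis
    using assms by simp
qed

lemma korenblum_log_weight_pos:
  assumes "0 < \<alpha>" "0 < x" "x \<le> 2"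
  shows "0 < korenblum_log_weight \<alpha> x"
  using ln_korenblum_log_weight_pos[OF assms] assms(2) by (simp add: korenblum_log_weight_def)

lemma korenblum_log_weight_one_minus_square_pos:
  assumes "0 < \<alpha>" "\<bar>y\<bar> < 1"
  shows "0 < ln (2 * exp (1/\<alpha>) / (1 - y\<^sup>2))" "0 < korenblum_log_weight \<alpha> (1 - y\<^sup>2)"
proof -
  have "0 < 1 - y\<^sup>2"
    using assms(2) by (simp add: abs_square_less_1)
  moreover have "1 - y\<^sup>2 \<le> 2"
    using zero_le_power2[of y] by linarith
  ultimately
  show "0 < ln (2 * exp (1/\<alpha>) / (1 - y\<^sup>2))" "0 < korenblum_log_weight \<alpha> (1 - y\<^sup>2)"
    using ln_korenblum_log_weight_pos[OF assms(1)] korenblum_log_weight_pos[OF assms(1)] by simp_all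
qed

lemma korenblum_log_weight_mono:
  assumes "0 < \<alpha>" "0 < x" "x \<le> y" "y \<le> 2"
  shows "korenblum_log_weight \<alpha> x \<le> korenblum_log_weight \<alpha> y"
proof -
  define h where "h u = u powr \<alpha> * (ln 2 + 1/\<alpha> - ln u)" for u
  have weight_eq: "korenblum_log_weight \<alpha> u = h u" if "0 < u" for u
    using that by (simp add: korenblum_log_weight_def h_def ln_div ln_mult)
  have "h x \<le> h y"
  proof (rule DERIV_nonneg_imp_increasing_open[OF \<open>x \<le> y\<close>])
    fix u assume u: "x < u" "u < y"
    then have "0 < u" "u \<le> 2" using assms by auto
    have "(h has_real_derivative \<alpha> * u powr (\<alpha> - 1) * (ln 2 - ln u)) (at u)"
      unfolding h_def using \<open>0 < u\<close> \<open>0 < \<alpha>\<close>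
      by (auto intro!: derivative_eq_intros simp: powr_diff field_simps)
    moreover have "ln u \<le> ln 2" using \<open>0 < u\<close> \<open>u \<le> 2\<close> by simp
    ultimately show "\<exists>d. (h has_real_derivative d) (at u) \<and> 0 \<le> d"
      using \<open>0 < \<alpha>\<close> by auto
  next
    show "continuous_on {x..y} h"
      unfolding h_def using assms by (intro continuous_intros) auto
  qed
  then show ?thesis
    using assms by (simp add: weight_eq)
qed

lemma unit_disc_iff [simp]: "z \<in> unit_disc \<longleftrightarrow> cmod z < 1"
  by (simp add: unit_disc_def)

lemma korenblum_log_norm_eq:
  "korenblum_log_norm \<alpha> f =
     (SUP z\<in>unit_disc. ereal (korenblum_log_weight \<alpha> (1 - (cmod z)\<^sup>2) * cmod (f z)))"
  by (simp add: korenblum_log_norm_def korenblum_log_weight_def)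

lemma korenblum_log_norm_le_imp_pointwise:
  assumes "0 < \<alpha>" "korenblum_log_norm \<alpha> f \<le> ereal M" "cmod z < 1"
  shows "cmod (f z) \<le> M / korenblum_log_weight \<alpha> (1 - (cmod z)\<^sup>2)"
proof -
  have "ereal (korenblum_log_weight \<alpha> (1 - (cmod z)\<^sup>2) * cmod (f z)) \<le> korenblum_log_norm \<alpha> f"
    unfolding korenblum_log_norm_eq using assms(3) by (intro SUP_upper) simp
  also note assms(2)
  finally have "korenblum_log_weight \<alpha> (1 - (cmod z)\<^sup>2) * cmod (f z) \<le> M"
    by simp
  moreover have "0 < korenblum_log_weight \<alpha> (1 - (cmod z)\<^sup>2)"
    using assms by (intro korenblum_log_weight_one_minus_square_pos(2)) auto
  ultimately show ?thesis
    by (simp add: pos_le_divide_eq mult.commute)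
qed

definition cesaro_majorant :: "real \<Rightarrow> real \<Rightarrow> real \<Rightarrow> real" where
  "cesaro_majorant \<alpha> \<rho> s = 1 / (korenblum_log_weight \<alpha> (1 - (s * \<rho>)\<^sup>2) * (1 - s * \<rho>))"

lemma mult_unit_interval_bounds:
  fixes s \<rho> :: real
  assumes "0 \<le> s" "s \<le> 1" "0 \<le> \<rho>" "\<rho> < 1"
  shows "0 \<le> s * \<rho>" "s * \<rho> < 1"
proof -
  show "0 \<le> s * \<rho>" using assms by simp
  moreover have "s * \<rho> \<le> \<rho>" using assms by (simp add: mult_left_le_one_le)
  ultimately show "s * \<rho> < 1" using assms by simp
qed

lemma cesaro_majorant_pos:
  assumes "0 < \<alpha>" "0 \<le> \<rho>" "\<rho> < 1" "0 \<le> s" "s \<le> 1"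
  shows "0 < cesaro_majorant \<alpha> \<rho> s"
  using mult_unit_interval_bounds[OF assms(4,5,2,3)]
    korenblum_log_weight_one_minus_square_pos(2)[OF assms(1), of "s * \<rho>"]
  by (simp add: cesaro_majorant_def)

lemma continuous_on_korenblum_log_weight: "continuous_on {0<..} (korenblum_log_weight \<alpha>)"
  unfolding korenblum_log_weight_def by (intro continuous_intros) auto

lemma continuous_on_cesaro_majorant:
  assumes "0 < \<alpha>" "0 \<le> \<rho>" "\<rho> < 1"
  shows "continuous_on {0..1} (cesaro_majorant \<alpha> \<rho>)"
proof -
  have bounds: "0 < 1 - (s * \<rho>)\<^sup>2" "0 < korenblum_log_weight \<alpha> (1 - (s * \<rho>)\<^sup>2)" "s * \<rho> \<noteq> 1"
    if "s \<in> {0..1}" for s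
    using mult_unit_interval_bounds[of s \<rho>] that assms
      korenblum_log_weight_one_minus_square_pos(2)[OF assms(1), of "s * \<rho>"]
    by (auto simp: abs_square_less_1)
  have "continuous_on {0..1} (\<lambda>s. korenblum_log_weight \<alpha> (1 - (s * \<rho>)\<^sup>2))"
    by (rule continuous_on_compose2[OF continuous_on_korenblum_log_weight])
      (use bounds(1) in \<open>auto intro!: continuous_intros\<close>)
  then show ?thesis
    unfolding cesaro_majorant_def using bounds by (intro continuous_intros) (auto dest: bounds(2))
qed

lemma integrable_cesaro_majorant:
  assumes "0 < \<alpha>" "0 \<le> \<rho>" "\<rho> < 1"
  shows "set_integrable lborel {0..1} (cesaro_majorant \<alpha> \<rho>)"
    and "cesaro_majorant \<alpha> \<rho> integrable_on {0..1}"
  using continuous_on_cesaro_majorant[OF assms]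
  by (auto intro: borel_integrable_atLeastAtMost' integrable_continuous_interval)

lemma norm_cesaro_le_integral_majorant:
  assumes "0 < \<alpha>" "f holomorphic_on unit_disc" "korenblum_log_norm \<alpha> f \<le> 1" "cmod z < 1"
  shows "cmod (cesaro f z) \<le> integral {0..1} (cesaro_majorant \<alpha> (cmod z))"
proof -
  define \<rho> where "\<rho> = cmod z"
  have \<rho>: "0 \<le> \<rho>" "\<rho> < 1" using assms(4) by (auto simp: \<rho>_def)
  have norm_tz: "cmod (of_real t * z) = t * \<rho>" "t * \<rho> < 1" if "t \<in> {0..1}" for t
    using that mult_unit_interval_bounds[OF _ _ \<rho>, of t] by (auto simp: norm_mult \<rho>_def)
  have "continuous_on {0..1} (\<lambda>t. f (of_real t * z))"
    by (rule continuous_on_compose2[OF holomorphic_on_imp_continuous_on[OF assms(2)]])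
      (auto intro!: continuous_intros simp: norm_tz)
  moreover have "1 - of_real t * z \<noteq> 0" if "t \<in> {0..1}" for t
    using norm_tz[OF that] by (metis norm_one order.irrefl right_minus_eq)
  ultimately have "(\<lambda>t. f (of_real t * z) / (1 - of_real t * z)) integrable_on {0..1}"
    by (intro integrable_continuous_interval continuous_intros) auto
  moreover have "cmod (f (of_real t * z) / (1 - of_real t * z)) \<le> cesaro_majorant \<alpha> \<rho> t"
    if "t \<in> {0..1}" for t
  proof -
    have "1 - t * \<rho> \<le> cmod (1 - of_real t * z)"
      using norm_triangle_ineq2[of 1 "of_real t * z"] norm_tz[OF that] by simp
    then have "cmod (f (of_real t * z) / (1 - of_real t * z)) \<le> cmod (f (of_real t * z)) / (1 - t * \<rho>)"
      using norm_tz(2)[OF that] unfolding norm_divide by (intro divide_left_mono mult_pos_pos) auto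
    also have "\<dots> \<le> (1 / korenblum_log_weight \<alpha> (1 - (t * \<rho>)\<^sup>2)) / (1 - t * \<rho>)"
      using korenblum_log_norm_le_imp_pointwise[OF assms(1), of f 1 "of_real t * z"] assms(3)
        norm_tz[OF that] by (intro divide_right_mono) (auto simp: one_ereal_def)
    finally show ?thesis
      by (simp add: cesaro_majorant_def)
  qed
  ultimately show ?thesis
    unfolding cesaro_def \<rho>_def[symmetric]
    by (intro integral_norm_bound_integral integrable_cesaro_majorant(2)[OF assms(1) \<rho>]) auto
qed

lemma one_minus_square_in_disc:
  fixes z :: complex
  assumes "cmod z < 1"
  shows "0 < Re (1 - z\<^sup>2)" "cmod (1 - z\<^sup>2) < 2" "1 - (cmod z)\<^sup>2 \<le> cmod (1 - z\<^sup>2)"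
proof -
  have "(cmod z)\<^sup>2 < 1" using assms by (simp add: abs_square_less_1)
  then show "0 < Re (1 - z\<^sup>2)"
    using complex_Re_le_cmod[of "z\<^sup>2"] by (simp add: norm_power)
  show "cmod (1 - z\<^sup>2) < 2"
    using norm_triangle_ineq4[of 1 "z\<^sup>2"] \<open>(cmod z)\<^sup>2 < 1\<close> by (simp add: norm_power)
  show "1 - (cmod z)\<^sup>2 \<le> cmod (1 - z\<^sup>2)"
    using norm_triangle_ineq2[of 1 "z\<^sup>2"] by (simp add: norm_power)
qed

definition korenblum_log_extremal :: "real \<Rightarrow> complex \<Rightarrow> complex" where
  "korenblum_log_extremal \<alpha> z =
     exp (- of_real \<alpha> * Ln (1 - z\<^sup>2)) / Ln (of_real (2 * exp (1/\<alpha>)) / (1 - z\<^sup>2))"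

lemma norm_korenblum_log_extremal_le:
  assumes "0 < \<alpha>" "cmod z < 1"
  shows "cmod (korenblum_log_extremal \<alpha> z) \<le> 1 / korenblum_log_weight \<alpha> (cmod (1 - z\<^sup>2))"
proof -
  define c where "c = 2 * exp (1/\<alpha>)"
  define w where "w = 1 - z\<^sup>2"
  have w: "0 < cmod w" "cmod w < 2"
    using one_minus_square_in_disc[OF assms(2)] by (auto simp: w_def)
  have ln_pos: "0 < ln (c / cmod w)"
    using ln_korenblum_log_weight_pos[OF assms(1)] w by (simp add: c_def)
  have "ln (c / cmod w) = Re (Ln (of_real c / w))"
    using w by (simp add: c_def norm_divide)
  also have "\<dots> \<le> cmod (Ln (of_real c / w))"
    by (rule complex_Re_le_cmod)
  finally have "ln (c / cmod w) \<le> cmod (Ln (of_real c / w))" .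
  have "cmod (exp (- of_real \<alpha> * Ln w)) = cmod w powr (- \<alpha>)"
    using w by (simp add: powr_def)
  then have "cmod (korenblum_log_extremal \<alpha> z) = cmod w powr (- \<alpha>) / cmod (Ln (of_real c / w))"
    by (simp add: korenblum_log_extremal_def c_def[symmetric] w_def[symmetric] norm_divide)
  also have "\<dots> \<le> cmod w powr (- \<alpha>) / ln (c / cmod w)"
    using \<open>ln (c / cmod w) \<le> _\<close> ln_pos by (intro divide_left_mono mult_pos_pos) auto
  also have "\<dots> = 1 / korenblum_log_weight \<alpha> (cmod w)"
    using w by (simp add: korenblum_log_weight_def c_def powr_minus divide_inverse)
  finally show ?thesis by (simp add: w_def)
qed

lemma korenblum_log_extremal_holomorphic:
  assumes "0 < \<alpha>"
  shows "korenblum_log_extremal \<alpha> holomorphic_on unit_disc"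
proof -
  define c where "c = 2 * exp (1/\<alpha>)"
  have Re_pos: "0 < Re (1 - z\<^sup>2)" "0 < Re (of_real c / (1 - z\<^sup>2))" if "cmod z < 1" for z
  proof -
    show "0 < Re (1 - z\<^sup>2)"
      using one_minus_square_in_disc(1)[OF that] .
    then show "0 < Re (of_real c / (1 - z\<^sup>2))"
      by (auto simp: Re_divide' c_def intro!: divide_pos_pos)
  qed
  have "Ln (of_real c / (1 - z\<^sup>2)) \<noteq> 0" if "cmod z < 1" for z
  proof -
    have norm_pos: "0 < cmod (1 - z\<^sup>2)"
      using Re_pos(1)[OF that] complex_Re_le_cmod by (rule less_le_trans)
    moreover have "0 < ln (c / cmod (1 - z\<^sup>2))"
      using ln_korenblum_log_weight_pos[OF assms norm_pos] one_minus_square_in_disc(2)[OF that]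
      by (simp add: c_def)
    ultimately have "0 < Re (Ln (of_real c / (1 - z\<^sup>2)))"
      by (simp add: c_def norm_divide)
    then show ?thesis by auto
  qed
  then show ?thesis
    unfolding korenblum_log_extremal_def[abs_def] c_def[symmetric] using Re_pos
    by (intro holomorphic_intros) (auto simp: complex_nonpos_Reals_iff dest: Re_pos)
qed

lemma korenblum_log_norm_extremal_le_1:
  assumes "0 < \<alpha>"
  shows "korenblum_log_norm \<alpha> (korenblum_log_extremal \<alpha>) \<le> 1"
  unfolding korenblum_log_norm_eq one_ereal_def
proof (rule SUP_least, unfold ereal_less_eq(3))
  fix z assume "z \<in> unit_disc"
  then have z: "cmod z < 1" by simp
  define W where "W = korenblum_log_weight \<alpha> (1 - (cmod z)\<^sup>2)"
  have "0 < 1 - (cmod z)\<^sup>2"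
    using z by (simp add: abs_square_less_1)
  then have "W \<le> korenblum_log_weight \<alpha> (cmod (1 - z\<^sup>2))"
    unfolding W_def using one_minus_square_in_disc[OF z]
    by (intro korenblum_log_weight_mono[OF assms]) auto
  have "0 < W"
    using korenblum_log_weight_one_minus_square_pos(2)[OF assms, of "cmod z"] z by (simp add: W_def)
  then have "1 / korenblum_log_weight \<alpha> (cmod (1 - z\<^sup>2)) \<le> 1 / W"
    using \<open>W \<le> _\<close> by (intro divide_left_mono mult_pos_pos) auto
  then have "W * cmod (korenblum_log_extremal \<alpha> z) \<le> W * (1 / W)"
    using norm_korenblum_log_extremal_le[OF assms z] \<open>0 < W\<close> by (intro mult_left_mono) auto
  then show "W * cmod (korenblum_log_extremal \<alpha> z) \<le> 1"
    using \<open>0 < W\<close> by simp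
qed

lemma korenblum_log_extremal_of_real:
  assumes "\<bar>y\<bar> < 1"
  shows "korenblum_log_extremal \<alpha> (of_real y) = of_real (1 / korenblum_log_weight \<alpha> (1 - y\<^sup>2))"
proof -
  have y: "0 < 1 - y\<^sup>2" using assms by (simp add: abs_square_less_1)
  have "1 - (of_real y)\<^sup>2 = complex_of_real (1 - y\<^sup>2)"
    and "of_real (2 * exp (1/\<alpha>)) / of_real (1 - y\<^sup>2) = complex_of_real (2 * exp (1/\<alpha>) / (1 - y\<^sup>2))"
    by simp_all
  moreover have "0 < 2 * exp (1/\<alpha>) / (1 - y\<^sup>2)"
    using y by simp
  ultimately have "korenblum_log_extremal \<alpha> (of_real y)
      = exp (of_real (- \<alpha> * ln (1 - y\<^sup>2))) / of_real (ln (2 * exp (1/\<alpha>) / (1 - y\<^sup>2)))"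
    unfolding korenblum_log_extremal_def using y by (simp only: Ln_of_real) simp
  also have "\<dots> = of_real (1 / korenblum_log_weight \<alpha> (1 - y\<^sup>2))"
    using y by (simp add: korenblum_log_weight_def powr_def exp_minus divide_inverse flip: exp_of_real)
  finally show ?thesis .
qed

lemma cesaro_korenblum_log_extremal_of_real:
  assumes "0 < \<alpha>" "0 \<le> r" "r < 1"
  shows "cesaro (korenblum_log_extremal \<alpha>) (of_real r) = of_real (integral {0..1} (cesaro_majorant \<alpha> r))"
proof -
  have "korenblum_log_extremal \<alpha> (of_real t * of_real r) / (1 - of_real t * of_real r)
      = of_real (cesaro_majorant \<alpha> r t)" if "t \<in> {0..1}" for t
  proof -
    have "\<bar>t * r\<bar> < 1"
      using mult_unit_interval_bounds[of t r] that assms by simp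
    then have "korenblum_log_extremal \<alpha> (of_real (t * r)) / of_real (1 - t * r)
        = of_real (1 / korenblum_log_weight \<alpha> (1 - (t * r)\<^sup>2)) / of_real (1 - t * r)"
      by (simp only: korenblum_log_extremal_of_real)
    then show ?thesis
      by (simp add: cesaro_majorant_def)
  qed
  then have "cesaro (korenblum_log_extremal \<alpha>) (of_real r)
      = integral {0..1} (\<lambda>t. of_real (cesaro_majorant \<alpha> r t))"
    unfolding cesaro_def by (intro integral_cong) auto
  also have "\<dots> = of_real (integral {0..1} (cesaro_majorant \<alpha> r))"
    using integrable_cesaro_majorant(2)[OF assms]
    by (intro integral_unique has_integral_of_real integrable_integral)
  finally show ?thesis .
qed

lemma cesaro_norm_log_to_korenblum_eq_SUP:
  assumes "0 < \<alpha>"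
  shows "cesaro_norm_log_to_korenblum \<alpha>
    = (SUP r\<in>{0..<1}. ereal ((1 - r\<^sup>2) powr \<alpha> * integral {0..1} (cesaro_majorant \<alpha> r)))"
    (is "_ = (SUP r\<in>{0..<1}. ereal (?bound r))")
proof (rule antisym)
  show "cesaro_norm_log_to_korenblum \<alpha> \<le> (SUP r\<in>{0..<1}. ereal (?bound r))"
    unfolding cesaro_norm_log_to_korenblum_def korenblum_norm_def
  proof (intro SUP_least)
    fix f z
    assume f: "f \<in> {f. f holomorphic_on unit_disc \<and> korenblum_log_norm \<alpha> f \<le> 1}"
      and z: "z \<in> unit_disc"
    then have "(1 - (cmod z)\<^sup>2) powr \<alpha> * cmod (cesaro f z) \<le> ?bound (cmod z)"
      using norm_cesaro_le_integral_majorant[OF assms] by (simp add: mult_left_mono)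
    also have "ereal (?bound (cmod z)) \<le> (SUP r\<in>{0..<1}. ereal (?bound r))"
      using z by (intro SUP_upper) auto
    finally show "ereal ((1 - (cmod z)\<^sup>2) powr \<alpha> * cmod (cesaro f z)) \<le> (SUP r\<in>{0..<1}. ereal (?bound r))"
      by simp
  qed
next
  show "(SUP r\<in>{0..<1}. ereal (?bound r)) \<le> cesaro_norm_log_to_korenblum \<alpha>"
  proof (rule SUP_least)
    fix r :: real assume r: "r \<in> {0..<1}"
    have "0 \<le> integral {0..1} (cesaro_majorant \<alpha> r)"
      using integrable_cesaro_majorant(2)[OF assms] cesaro_majorant_pos[OF assms] r
      by (intro integral_nonneg) (auto intro: less_imp_le)
    then have "?bound r = (1 - (cmod (of_real r))\<^sup>2) powr \<alpha> * cmod (cesaro (korenblum_log_extremal \<alpha>) (of_real r))"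
      using cesaro_korenblum_log_extremal_of_real[OF assms] r by simp
    also have "ereal \<dots> \<le> korenblum_norm \<alpha> (cesaro (korenblum_log_extremal \<alpha>))"
      unfolding korenblum_norm_def using r by (intro SUP_upper) auto
    also have "\<dots> \<le> cesaro_norm_log_to_korenblum \<alpha>"
      unfolding cesaro_norm_log_to_korenblum_def
      using korenblum_log_extremal_holomorphic[OF assms] korenblum_log_norm_extremal_le_1[OF assms]
      by (intro SUP_upper) auto
    finally show "ereal (?bound r) \<le> cesaro_norm_log_to_korenblum \<alpha>" .
  qed
qed

(* The change of variables e^(-t) = s (1 - r) / (1 - s r), under which dt = -(1/s + r/(1 - s r)) ds. *)
definition cesaro_subst :: "real \<Rightarrow> real \<Rightarrow> real" where
  "cesaro_subst r s = ln (1 - s * r) - ln s - ln (1 - r)"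

lemma cesaro_subst_nonneg:
  assumes "0 \<le> r" "r < 1" "0 < s" "s \<le> 1"
  shows "0 \<le> cesaro_subst r s"
proof -
  have "0 < 1 - s * r"
    using mult_unit_interval_bounds[of s r] assms by simp
  then have "cesaro_subst r s = - ln (s * (1 - r) / (1 - s * r))"
    using assms by (simp add: cesaro_subst_def ln_mult ln_div)
  moreover have "s * (1 - r) / (1 - s * r) \<le> 1"
    using assms \<open>0 < 1 - s * r\<close> by (simp add: pos_divide_le_eq algebra_simps)
  ultimately show ?thesis
    using assms \<open>0 < 1 - s * r\<close> by simp
qed

lemma has_real_derivative_minus_cesaro_subst:
  assumes "0 \<le> r" "r < 1" "0 < s" "s < 1"
  shows "((\<lambda>s. - cesaro_subst r s) has_real_derivative 1 / s + r / (1 - s * r)) (at s)"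
proof -
  have "0 < 1 - s * r"
    using mult_unit_interval_bounds[of s r] assms by simp
  then show ?thesis
    using assms unfolding cesaro_subst_def by (auto intro!: derivative_eq_intros simp: field_simps)
qed

lemma cesaro_subst_at_0: "LIM s at_right 0. - cesaro_subst r s :> at_bot"
proof -
  have "((\<lambda>s. ln (1 - r) - ln (1 - s * r)) \<longlongrightarrow> ln (1 - r) - ln (1 - 0 * r)) (at_right 0)"
    by (intro tendsto_intros) auto
  then have "LIM s at_right 0. (ln (1 - r) - ln (1 - s * r)) + ln s :> at_bot"
    using filterlim_tendsto_add_at_bot_iff ln_at_0 by blast
  then show ?thesis
    by (simp add: cesaro_subst_def algebra_simps)
qed

lemma cesaro_subst_at_1:
  assumes "r < 1"
  shows "((\<lambda>s. - cesaro_subst r s) \<longlongrightarrow> 0) (at_left 1)"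
proof -
  have "((\<lambda>s. - cesaro_subst r s) \<longlongrightarrow> - (ln (1 - 1 * r) - ln 1 - ln (1 - r))) (at_left 1)"
    unfolding cesaro_subst_def using assms by (intro tendsto_intros) auto
  then show ?thesis
    by simp
qed

lemma cesaro_kernel_substitution:
  assumes "0 < \<alpha>" "0 \<le> r" "r < 1" "0 < s" "s < 1"
  shows "cesaro_kernel \<alpha> r (cesaro_subst r s) * (1 / s + r / (1 - s * r))
    = (1 - r\<^sup>2) powr \<alpha> * cesaro_majorant \<alpha> r s"
proof -
  define P Q R where "P = 1 - r" and "Q = 1 - s * r" and "R = 1 + s * r"
  define L where "L = ln (2 * exp (1/\<alpha>) / (1 - (s * r)\<^sup>2))"
  have "0 \<le> s * r" "s * r < 1"
    using mult_unit_interval_bounds[of s r] assms by auto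
  then have pos: "0 < P" "0 < Q" "0 < R" "0 < 1 + r"
    unfolding P_def Q_def R_def using assms by linarith+
  have "0 < L"
    unfolding L_def using \<open>0 \<le> s * r\<close> \<open>s * r < 1\<close>
    by (intro korenblum_log_weight_one_minus_square_pos(1)[OF assms(1)]) simp
  have "exp (- (ln (1 - s * r) - ln s - ln (1 - r))) = s * P / Q"
    using pos assms by (simp add: exp_diff exp_add exp_minus P_def Q_def field_simps)
  moreover have "1 - (1 - s * P / Q) * r = P / Q" "1 - (1 - 2 * (s * P / Q)) * r = P * R / Q"
    using pos by (auto simp: P_def Q_def R_def field_simps)
  moreover have "r * (s * P / Q) / (P / Q) = s * r"
    using pos by (simp add: field_simps)
  moreover have "(P / Q) powr (2 * \<alpha> - 1) = P powr \<alpha> * P powr \<alpha> / (Q powr \<alpha> * Q powr \<alpha>) * (Q / P)"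
  proof -
    have "(P / Q) powr (2 * \<alpha> - 1) = (P / Q) powr (\<alpha> + \<alpha>) / (P / Q) powr 1"
      by (simp only: powr_diff mult_2)
    then show ?thesis
      using pos by (simp add: powr_divide flip: powr_add)
  qed
  ultimately have kernel: "cesaro_kernel \<alpha> r (cesaro_subst r s)
      = (1 + r) powr \<alpha> * (s * P / Q) * (P powr \<alpha> * P powr \<alpha> / (Q powr \<alpha> * Q powr \<alpha>) * (Q / P))
        / (P powr \<alpha> * R powr \<alpha> / Q powr \<alpha> * L)"
    using pos
    by (simp only: cesaro_kernel_def cesaro_subst_def L_def powr_divide powr_mult less_imp_le mult_nonneg_nonneg)
  have "1 - (s * r)\<^sup>2 = Q * R" "1 - r\<^sup>2 = (1 + r) * P" "1 / s + r / (1 - s * r) = 1 / (s * Q)"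
    using assms pos by (auto simp: P_def Q_def R_def field_simps power2_eq_square)
  then have "(1 - r\<^sup>2) powr \<alpha> * cesaro_majorant \<alpha> r s
      = (1 + r) powr \<alpha> * P powr \<alpha> / (Q powr \<alpha> * R powr \<alpha> * L * Q)"
    and "1 / s + r / (1 - s * r) = 1 / (s * Q)"
    using pos by (simp_all add: cesaro_majorant_def korenblum_log_weight_def L_def powr_mult Q_def)
  moreover have "a * (s * P / Q) * (p * p / (q * q) * (Q / P)) / (p * \<rho> / q * L) * (1 / (s * Q))
      = a * p / (q * \<rho> * L * Q)" if "0 < p" "0 < q" "0 < \<rho>" for a p q \<rho> :: real
    using that pos assms \<open>0 < L\<close> by (simp add: field_simps)
  ultimately show ?thesis
    using pos by (simp add: kernel)
qed

lemma cesaro_kernel_continuous_nonneg: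
  assumes "0 < \<alpha>" "0 \<le> r" "r < 1" "0 \<le> t"
  shows "isCont (cesaro_kernel \<alpha> r) t" "0 \<le> cesaro_kernel \<alpha> r t"
proof -
  define x where "x = exp (-t)"
  have x: "0 < x" "x \<le> 1" using assms by (auto simp: x_def)
  have D: "0 < 1 - (1 - x) * r"
    using mult_unit_interval_bounds[of "1 - x" r] x assms by simp
  have "1 - (1 - 2 * x) * r = (1 - r) + 2 * (x * r)"
    by (simp add: algebra_simps)
  moreover have "0 \<le> x * r"
    using x assms by simp
  ultimately have E: "0 < 1 - (1 - 2 * x) * r"
    using assms by linarith
  have "r * x < 1 - (1 - x) * r"
    using assms by (simp add: algebra_simps)
  then have "\<bar>r * x / (1 - (1 - x) * r)\<bar> < 1"
    using D x assms by (simp add: pos_divide_less_eq)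
  then have u: "0 < 1 - (r * x / (1 - (1 - x) * r))\<^sup>2"
    and L: "0 < ln (2 * exp (1/\<alpha>) / (1 - (r * x / (1 - (1 - x) * r))\<^sup>2))"
    using korenblum_log_weight_one_minus_square_pos(1)[OF assms(1)] by (simp_all add: abs_square_less_1)
  show "isCont (cesaro_kernel \<alpha> r) t"
    unfolding cesaro_kernel_def isCont_def using D E L u
    by (intro tendsto_intros) (simp_all add: x_def[symmetric])
  show "0 \<le> cesaro_kernel \<alpha> r t"
    unfolding cesaro_kernel_def x_def[symmetric] using D E L x
    by (intro divide_nonneg_nonneg mult_nonneg_nonneg) auto
qed

lemma integral_cesaro_kernel:
  assumes "0 < \<alpha>" "0 \<le> r" "r < 1"
  shows "(LBINT t:{0..}. cesaro_kernel \<alpha> r t) = (1 - r\<^sup>2) powr \<alpha> * integral {0..1} (cesaro_majorant \<alpha> r)"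
proof -
  define g where "g s = - cesaro_subst r s" for s
  define g' where "g' s = 1 / s + r / (1 - s * r)" for s
  have sr: "0 < 1 - s * r" if "0 \<le> s" "s \<le> 1" for s
    using mult_unit_interval_bounds[OF that assms(2,3)] by simp
  have subst: "cesaro_kernel \<alpha> r (- g s) * g' s = (1 - r\<^sup>2) powr \<alpha> * cesaro_majorant \<alpha> r s"
    if "0 < s" "s < 1" for s
    using cesaro_kernel_substitution[OF assms that] by (simp add: g_def g'_def)
  have "(LBINT t:{0..}. cesaro_kernel \<alpha> r t) = (LBINT t=ereal 0..\<infinity>. cesaro_kernel \<alpha> r t)"
    unfolding interval_integral_to_infinity_eq
    by (rule set_integral_discrete_difference[where X="{0}"]) auto
  also have "\<dots> = (LBINT y=-\<infinity>..ereal 0. cesaro_kernel \<alpha> r (- y))"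
    by (subst interval_integral_reflect) simp
  also have "\<dots> = (LBINT s=ereal 0..ereal 1. cesaro_kernel \<alpha> r (- g s) * g' s)"
  proof (rule interval_integral_substitution_nonneg(2))
    show "DERIV g s :> g' s" if "ereal 0 < ereal s" "ereal s < ereal 1" for s
      using has_real_derivative_minus_cesaro_subst[OF assms(2,3)] that
      unfolding g_def[abs_def] g'_def by simp
    show "isCont (\<lambda>y. cesaro_kernel \<alpha> r (- y)) (g s)" if "ereal 0 < ereal s" "ereal s < ereal 1" for s
      using cesaro_kernel_continuous_nonneg(1)[OF assms] cesaro_subst_nonneg[OF assms(2,3), of s] that
      by (auto simp: g_def intro!: continuous_intros isCont_o2[where f = uminus, unfolded o_def])
    show "isCont g' s" if "ereal 0 < ereal s" "ereal s < ereal 1" for s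
      using that sr[of s] unfolding g'_def by (intro continuous_intros) auto
    show "0 \<le> cesaro_kernel \<alpha> r (- g s)" if "ereal 0 < ereal s" "ereal s < ereal 1" for s
      using cesaro_kernel_continuous_nonneg(2)[OF assms] cesaro_subst_nonneg[OF assms(2,3), of s] that
      by (simp add: g_def)
    show "0 \<le> g' s" if "ereal 0 \<le> ereal s" "ereal s \<le> ereal 1" for s
      using that sr[of s] assms unfolding g'_def by simp
    show "((ereal \<circ> g \<circ> real_of_ereal) \<longlongrightarrow> -\<infinity>) (at_right (ereal 0))"
      using cesaro_subst_at_0[of r]
      by (simp add: g_def[abs_def] ereal_tendsto_simps1 ereal_tendsto_simps2)
    show "((ereal \<circ> g \<circ> real_of_ereal) \<longlongrightarrow> ereal 0) (at_left (ereal 1))"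
      using cesaro_subst_at_1[OF assms(3)]
      by (simp add: g_def[abs_def] ereal_tendsto_simps1 ereal_tendsto_simps2)
    have "set_integrable lborel {0<..<1} (\<lambda>s. (1 - r\<^sup>2) powr \<alpha> * cesaro_majorant \<alpha> r s)"
      using integrable_cesaro_majorant(1)[OF assms]
      by (rule set_integrable_subset[OF set_integrable_mult_right]) auto
    then show "set_integrable lborel (einterval (ereal 0) (ereal 1)) (\<lambda>s. cesaro_kernel \<alpha> r (- g s) * g' s)"
      by (rule set_integrable_cong[THEN iffD1, rotated -1]) (auto simp: subst)
  qed simp
  also have "\<dots> = (LBINT s=ereal 0..ereal 1. (1 - r\<^sup>2) powr \<alpha> * cesaro_majorant \<alpha> r s)"
    by (rule interval_integral_cong) (auto simp: subst)
  also have "\<dots> = (1 - r\<^sup>2) powr \<alpha> * integral {0..1} (cesaro_majorant \<alpha> r)"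
    using interval_integral_eq_integral[OF _ integrable_cesaro_majorant(1)[OF assms]] by simp
  finally show ?thesis .
qed

lemma cesaro_majorant_at_0: "cesaro_majorant \<alpha> 0 = (\<lambda>s. 1 / (1/\<alpha> + ln 2))"
  by (simp add: fun_eq_iff cesaro_majorant_def korenblum_log_weight_def ln_mult add.commute)

theorem theorem4p1:
  fixes \<alpha> :: real
  assumes "0 < \<alpha>" and "\<alpha> < 1"
  shows "cesaro_norm_log_to_korenblum \<alpha>
           = (SUP r\<in>{0..<1}. ereal (LBINT t:{0..}. cesaro_kernel \<alpha> r t))
         \<and> cesaro_norm_log_to_korenblum \<alpha> \<ge> ereal (1 / (1/\<alpha> + ln 2))"
proof
  show norm_eq: "cesaro_norm_log_to_korenblum \<alpha>
      = (SUP r\<in>{0..<1}. ereal (LBINT t:{0..}. cesaro_kernel \<alpha> r t))"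
    unfolding cesaro_norm_log_to_korenblum_eq_SUP[OF assms(1)]
    by (rule SUP_cong) (auto simp: integral_cesaro_kernel[OF assms(1)])
  have "(LBINT t:{0..}. cesaro_kernel \<alpha> 0 t) = 1 / (1/\<alpha> + ln 2)"
    by (simp add: integral_cesaro_kernel[OF assms(1)] cesaro_majorant_at_0)
  then show "cesaro_norm_log_to_korenblum \<alpha> \<ge> ereal (1 / (1/\<alpha> + ln 2))"
    unfolding norm_eq by (intro SUP_upper2[of 0]) auto
qed

end
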